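(* A reflexive oriented graph $D$ is transitive if and only if $G=\mathrm{Split}(D)$ is WDI. Furthermore, if $G$ is WDI, then the perfect matching $M=\{\mathrm{out}(v)\to\mathrm{in}(v)\mid v\in V(D)\}$ is exactly the set of disimplicial arcs of $G$.
   Context: A digraph is a finite vertex set $V$ with arc set $E\subseteq V\times V$ (loops allowed). $D$ is reflexive if $v\to v\in E$ for all $v$; oriented if $v\to w$ and $w\to v$ are both arcs only when $v=w$; a vertex $v$ is transitive if $x\to y$ is an arc for every in-neighbor $x$ and out-neighbor $y$ of $v$, and $D$ is transitive if all vertices are. Source: no in-neighbors; sink: no out-neighbors. $\mathrm{Split}(D)$ has a vertex $\mathrm{out}(v)$ for each non-sink $v$ and a vertex $\mathrm{in}(w)$ for each non-source $w$ (all distinct), with $\mathrm{out}(v)\to\mathrm{in}(w)$ an arc iff $v\to w\in E(D)$, no other arcs. A diclique is a pair $(V,W)$ of nonempty vertex sets, written $V\to W$, with $v\to w$ an arc for all $v\in V$, $w\in W$; an arc $v\to w$ belongs to it if $v\in V$, $w\in W$. It is maximal if it is not properly contained (componentwise) in another diclique. An arc $v\to w$ is disimplicial if $x\to y$ is an arc for all in-neighbors $x$ of $w$ and out-neighbors $y$ of $v$. A reduced diclique is a maximal diclique containing a disimplicial arc. A digraph is weakly diclique irreducible (WDI) if every arc belongs to some reduced diclique. *)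

theory Defs
  imports Main
begin

definition digraph :: "'a set \<Rightarrow> ('a \<times> 'a) set \<Rightarrow> bool" where
  "digraph V E \<longleftrightarrow> finite V \<and> E \<subseteq> V \<times> V"

definition reflexive_dg :: "'a set \<Rightarrow> ('a \<times> 'a) set \<Rightarrow> bool" where
  "reflexive_dg V E \<longleftrightarrow> (\<forall>v\<in>V. (v, v) \<in> E)"

definition oriented_dg :: "('a \<times> 'a) set \<Rightarrow> bool" where
  "oriented_dg E \<longleftrightarrow> (\<forall>v w. (v, w) \<in> E \<and> (w, v) \<in> E \<longrightarrow> v = w)"

definition transitive_vertex :: "('a \<times> 'a) set \<Rightarrow> 'a \<Rightarrow> bool" where
  "transitive_vertex E v \<longleftrightarrow> (\<forall>x y. (x, v) \<in> E \<and> (v, y) \<in> E \<longrightarrow> (x, y) \<in> E)"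

definition transitive_dg :: "'a set \<Rightarrow> ('a \<times> 'a) set \<Rightarrow> bool" where
  "transitive_dg V E \<longleftrightarrow> (\<forall>v\<in>V. transitive_vertex E v)"

definition is_source :: "('a \<times> 'a) set \<Rightarrow> 'a \<Rightarrow> bool" where
  "is_source E v \<longleftrightarrow> (\<forall>x. (x, v) \<notin> E)"

definition is_sink :: "('a \<times> 'a) set \<Rightarrow> 'a \<Rightarrow> bool" where
  "is_sink E v \<longleftrightarrow> (\<forall>y. (v, y) \<notin> E)"

text \<open>Split(D): out(v) is rendered as Inl v, in(w) as Inr w.\<close>

definition split_V :: "'a set \<Rightarrow> ('a \<times> 'a) set \<Rightarrow> ('a + 'a) set" where
  "split_V V E = {Inl v |v. v \<in> V \<and> \<not> is_sink E v} \<union> {Inr w |w. w \<in> V \<and> \<not> is_source E w}"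

definition split_E :: "('a \<times> 'a) set \<Rightarrow> (('a + 'a) \<times> ('a + 'a)) set" where
  "split_E E = {(Inl v, Inr w) |v w. (v, w) \<in> E}"

definition diclique :: "'b set \<Rightarrow> ('b \<times> 'b) set \<Rightarrow> 'b set \<Rightarrow> 'b set \<Rightarrow> bool" where
  "diclique V E A B \<longleftrightarrow> A \<noteq> {} \<and> B \<noteq> {} \<and> A \<subseteq> V \<and> B \<subseteq> V \<and> (\<forall>a\<in>A. \<forall>b\<in>B. (a, b) \<in> E)"

definition maximal_diclique :: "'b set \<Rightarrow> ('b \<times> 'b) set \<Rightarrow> 'b set \<Rightarrow> 'b set \<Rightarrow> bool" where
  "maximal_diclique V E A B \<longleftrightarrow> diclique V E A B \<and>
     (\<forall>A' B'. diclique V E A' B' \<and> A \<subseteq> A' \<and> B \<subseteq> B' \<longrightarrow> A' = A \<and> B' = B)"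

definition disimplicial_arc :: "('b \<times> 'b) set \<Rightarrow> 'b \<Rightarrow> 'b \<Rightarrow> bool" where
  "disimplicial_arc E v w \<longleftrightarrow> (v, w) \<in> E \<and>
     (\<forall>x y. (x, w) \<in> E \<and> (v, y) \<in> E \<longrightarrow> (x, y) \<in> E)"

definition reduced_diclique :: "'b set \<Rightarrow> ('b \<times> 'b) set \<Rightarrow> 'b set \<Rightarrow> 'b set \<Rightarrow> bool" where
  "reduced_diclique V E A B \<longleftrightarrow> maximal_diclique V E A B \<and>
     (\<exists>v\<in>A. \<exists>w\<in>B. disimplicial_arc E v w)"

definition WDI :: "'b set \<Rightarrow> ('b \<times> 'b) set \<Rightarrow> bool" where
  "WDI V E \<longleftrightarrow> (\<forall>(v, w)\<in>E. \<exists>A B. reduced_diclique V E A B \<and> v \<in> A \<and> w \<in> B)"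

end

theory Submission
  imports Defs
begin

text \<open>In a reflexive oriented graph a disimplicial arc out(a) \<rightarrow> in(b) of Split(D) forces b \<rightarrow> a
  (use the loops at a and b), so a = b; and out(v) \<rightarrow> in(v) is disimplicial exactly when v is
  transitive. If v is transitive, the in-neighbours of v on the out side together with its
  out-neighbours on the in side form a maximal diclique through out(v) \<rightarrow> in(v) that contains every
  arc leaving out(v); hence transitivity gives WDI. Conversely, a reduced diclique through
  out(v) \<rightarrow> in(v) contains a disimplicial arc out(u) \<rightarrow> in(u) with v \<rightarrow> u and u \<rightarrow> v, so u = v
  and v is transitive.\<close>

lemma Inl_in_split_V [simp]: "Inl v \<in> split_V V E \<longleftrightarrow> v \<in> V \<and> \<not> is_sink E v"
  unfolding split_V_def by auto

lemma Inr_in_split_V [simp]: "Inr w \<in> split_V V E \<longleftrightarrow> w \<in> V \<and> \<not> is_source E w"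
  unfolding split_V_def by auto

lemma split_E_iff:
  "(p, q) \<in> split_E E \<longleftrightarrow> (\<exists>a b. p = Inl a \<and> q = Inr b \<and> (a, b) \<in> E)"
  unfolding split_E_def by auto

lemma Inl_Inr_in_split_E [simp]: "(Inl a, Inr b) \<in> split_E E \<longleftrightarrow> (a, b) \<in> E"
  unfolding split_E_def by auto

lemma disimplicial_arc_split_iff:
  "disimplicial_arc (split_E E) (Inl a) (Inr b) \<longleftrightarrow>
     (a, b) \<in> E \<and> (\<forall>x y. (x, b) \<in> E \<and> (a, y) \<in> E \<longrightarrow> (x, y) \<in> E)"
  unfolding disimplicial_arc_def split_E_iff by blast

lemma disimplicial_loop_split_iff:
  "disimplicial_arc (split_E E) (Inl v) (Inr v) \<longleftrightarrow> (v, v) \<in> E \<and> transitive_vertex E v"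
  unfolding disimplicial_arc_split_iff transitive_vertex_def by blast

lemma disimplicial_arc_split_is_loop:
  assumes "E \<subseteq> V \<times> V" "reflexive_dg V E" "oriented_dg E"
    and "disimplicial_arc (split_E E) (Inl a) (Inr b)"
  shows "a = b"
proof -
  have ab: "(a, b) \<in> E" and dis: "\<And>x y. (x, b) \<in> E \<Longrightarrow> (a, y) \<in> E \<Longrightarrow> (x, y) \<in> E"
    using assms(4) unfolding disimplicial_arc_split_iff by blast+
  have "(b, b) \<in> E" "(a, a) \<in> E"
    using ab assms(1,2) unfolding reflexive_dg_def by auto
  then have "(b, a) \<in> E" using dis by blast
  with ab assms(3) show ?thesis unfolding oriented_dg_def by blast
qed

lemma disimplicial_arcs_split:
  assumes "E \<subseteq> V \<times> V" "reflexive_dg V E" "oriented_dg E"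
  shows "{p \<in> split_E E. disimplicial_arc (split_E E) (fst p) (snd p)} =
         {(Inl v, Inr v) |v. v \<in> V \<and> transitive_vertex E v}"
proof safe
  fix p q assume "(p, q) \<in> split_E E" and dis: "disimplicial_arc (split_E E) (fst (p, q)) (snd (p, q))"
  then obtain a b where pq: "p = Inl a" "q = Inr b" "(a, b) \<in> E"
    unfolding split_E_iff by blast
  with dis have "a = b" using disimplicial_arc_split_is_loop[OF assms] by simp
  with pq dis have "disimplicial_arc (split_E E) (Inl b) (Inr b)" by simp
  then have "transitive_vertex E b" unfolding disimplicial_loop_split_iff ..
  moreover have "b \<in> V" using pq(3) assms(1) by auto
  ultimately show "\<exists>v. (p, q) = (Inl v, Inr v) \<and> v \<in> V \<and> transitive_vertex E v"
    using pq \<open>a = b\<close> by auto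
next
  fix v assume "v \<in> V" "transitive_vertex E v"
  moreover from \<open>v \<in> V\<close> assms(2) have "(v, v) \<in> E" unfolding reflexive_dg_def by blast
  ultimately have "disimplicial_arc (split_E E) (Inl v) (Inr v)"
    unfolding disimplicial_loop_split_iff by simp
  then show "(Inl v, Inr v) \<in> split_E E"
    and "disimplicial_arc (split_E E) (fst (Inl v, Inr v)) (snd (Inl v, Inr v))"
    unfolding disimplicial_arc_def by simp_all
qed

lemma maximal_diclique_split_neighbourhood:
  assumes "E \<subseteq> V \<times> V" "(v, v) \<in> E" "transitive_vertex E v"
  defines "A \<equiv> Inl ` {x. (x, v) \<in> E}" and "B \<equiv> Inr ` {y. (v, y) \<in> E}"
  shows "maximal_diclique (split_V V E) (split_E E) A B"
proof -
  have vA: "Inl v \<in> A" and vB: "Inr v \<in> B" using assms(2) unfolding A_def B_def by auto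
  have "A \<subseteq> split_V V E"
  proof
    fix a assume "a \<in> A"
    then obtain x where "a = Inl x" "(x, v) \<in> E" unfolding A_def by blast
    with assms(1) show "a \<in> split_V V E" by (auto simp: is_sink_def)
  qed
  moreover have "B \<subseteq> split_V V E"
  proof
    fix b assume "b \<in> B"
    then obtain y where "b = Inr y" "(v, y) \<in> E" unfolding B_def by blast
    with assms(1) show "b \<in> split_V V E" by (auto simp: is_source_def)
  qed
  moreover have "(a, b) \<in> split_E E" if "a \<in> A" "b \<in> B" for a b
  proof -
    obtain x y where "a = Inl x" "(x, v) \<in> E" "b = Inr y" "(v, y) \<in> E"
      using \<open>a \<in> A\<close> \<open>b \<in> B\<close> unfolding A_def B_def by blast
    moreover from this(2,4) assms(3) have "(x, y) \<in> E" unfolding transitive_vertex_def by blast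
    ultimately show ?thesis by simp
  qed
  ultimately have diclique: "diclique (split_V V E) (split_E E) A B"
    unfolding diclique_def using vA vB by blast
  have "A' = A \<and> B' = B"
    if "diclique (split_V V E) (split_E E) A' B'" "A \<subseteq> A'" "B \<subseteq> B'" for A' B'
  proof -
    have complete: "\<forall>a\<in>A'. \<forall>b\<in>B'. (a, b) \<in> split_E E"
      using that(1) unfolding diclique_def by blast
    have "A' \<subseteq> A"
    proof
      fix a assume "a \<in> A'"
      with complete vB that(3) have "(a, Inr v) \<in> split_E E" by blast
      then show "a \<in> A" unfolding split_E_iff A_def by auto
    qed
    moreover have "B' \<subseteq> B"
    proof
      fix b assume "b \<in> B'"
      with complete vA that(2) have "(Inl v, b) \<in> split_E E" by blast
      then show "b \<in> B" unfolding split_E_iff B_def by auto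
    qed
    ultimately show ?thesis using that(2,3) by blast
  qed
  with diclique show ?thesis unfolding maximal_diclique_def by blast
qed

lemma WDI_split_if_transitive:
  assumes "E \<subseteq> V \<times> V" "reflexive_dg V E" "transitive_dg V E"
  shows "WDI (split_V V E) (split_E E)"
  unfolding WDI_def
proof clarify
  fix p q assume "(p, q) \<in> split_E E"
  then obtain v w where pq: "p = Inl v" "q = Inr w" "(v, w) \<in> E"
    unfolding split_E_iff by blast
  have "v \<in> V" using pq(3) assms(1) by auto
  then have vv: "(v, v) \<in> E" and tv: "transitive_vertex E v"
    using assms(2,3) unfolding reflexive_dg_def transitive_dg_def by auto
  define A :: "('a + 'a) set" where "A = Inl ` {x. (x, v) \<in> E}"
  define B :: "('a + 'a) set" where "B = Inr ` {y. (v, y) \<in> E}"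
  have "maximal_diclique (split_V V E) (split_E E) A B"
    unfolding A_def B_def by (rule maximal_diclique_split_neighbourhood[OF assms(1) vv tv])
  moreover have "disimplicial_arc (split_E E) (Inl v) (Inr v)"
    unfolding disimplicial_loop_split_iff using vv tv ..
  moreover have "Inl v \<in> A" "Inr v \<in> B" "p \<in> A" "q \<in> B"
    using pq vv unfolding A_def B_def by auto
  ultimately show "\<exists>A B. reduced_diclique (split_V V E) (split_E E) A B \<and> p \<in> A \<and> q \<in> B"
    unfolding reduced_diclique_def by blast
qed

lemma transitive_if_WDI_split:
  assumes "E \<subseteq> V \<times> V" "reflexive_dg V E" "oriented_dg E"
    and "WDI (split_V V E) (split_E E)"
  shows "transitive_dg V E"
  unfolding transitive_dg_def
proof
  fix v assume "v \<in> V"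
  with assms(2) have "(Inl v, Inr v) \<in> split_E E" unfolding reflexive_dg_def by simp
  then obtain A B where red: "reduced_diclique (split_V V E) (split_E E) A B"
    and vA: "Inl v \<in> A" and vB: "Inr v \<in> B"
    using assms(4) unfolding WDI_def by blast
  then obtain a b where ab: "a \<in> A" "b \<in> B" and dis: "disimplicial_arc (split_E E) a b"
    unfolding reduced_diclique_def by blast
  have complete: "\<forall>a\<in>A. \<forall>b\<in>B. (a, b) \<in> split_E E"
    using red unfolding reduced_diclique_def maximal_diclique_def diclique_def by blast
  obtain u u' where uu: "a = Inl u" "b = Inr u'"
    using complete ab unfolding split_E_iff by blast
  with dis have "u = u'" using disimplicial_arc_split_is_loop[OF assms(1-3)] by blast
  have "(v, u) \<in> E" using complete vA ab(2) uu \<open>u = u'\<close> by fastforce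
  moreover have "(u, v) \<in> E" using complete vB ab(1) uu by fastforce
  ultimately have "u = v" using assms(3) unfolding oriented_dg_def by blast
  with dis uu \<open>u = u'\<close> have "disimplicial_arc (split_E E) (Inl v) (Inr v)" by simp
  then show "transitive_vertex E v" unfolding disimplicial_loop_split_iff ..
qed

theorem theorem13:
  fixes V :: "'a set" and E :: "('a \<times> 'a) set"
  assumes "digraph V E" and "reflexive_dg V E" and "oriented_dg E"
  shows "(transitive_dg V E \<longleftrightarrow> WDI (split_V V E) (split_E E)) \<and>
         (WDI (split_V V E) (split_E E) \<longrightarrow>
           {(Inl v, Inr v) |v. v \<in> V} =
           {a \<in> split_E E. disimplicial_arc (split_E E) (fst a) (snd a)})"
proof -
  have EV: "E \<subseteq> V \<times> V" using assms(1) unfolding digraph_def by auto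
  have iff: "transitive_dg V E \<longleftrightarrow> WDI (split_V V E) (split_E E)"
    using WDI_split_if_transitive[OF EV assms(2)] transitive_if_WDI_split[OF EV assms(2,3)]
    by blast
  have "{(Inl v, Inr v) |v. v \<in> V} =
        {a \<in> split_E E. disimplicial_arc (split_E E) (fst a) (snd a)}"
    if "transitive_dg V E"
    using that unfolding disimplicial_arcs_split[OF EV assms(2,3)] transitive_dg_def by auto
  with iff show ?thesis by blast
qed

end
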